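(* For every integer $d\ge 0$ there is a simplicial complex $\Delta$ with $\mathrm{ctd}(\Delta)\ge d$.
   Context: Given convex polytopes $P_1,\dots,P_n\subset\mathbb{R}^d$ each containing the origin and a point $\mu\in\mathbb{R}^d$, write $P_\sigma=\sum_{i\in\sigma}P_i$ (Minkowski sum) for $\sigma\subseteq[n]$, with $P_\emptyset=\{0\}$; the Minkowski complex $\Delta(\mathcal{P};\mu)$ is the simplicial complex on vertex set $[n]$ whose faces are the $\sigma\subseteq[n]$ with $\mu\notin P_\sigma$. The convex threshold dimension $\mathrm{ctd}(\Delta)$ of a simplicial complex $\Delta$ on vertex set $[n]$ is the smallest $d$ such that $\Delta=\Delta(\mathcal{P};\mu)$ for some family $\mathcal{P}=(P_1,\dots,P_n)$ of convex bodies (equivalently, convex polytopes) in $\mathbb{R}^d$ containing the origin and some $\mu\in\mathbb{R}^d$; this is finite for every simplicial complex. *)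

theory Defs
  imports Complex_Main "HOL-Library.Function_Algebras"
begin

text \<open>Points of R^d are represented as functions nat => real vanishing outside {0..<d}
  (explicit carrier, since the dimension d is quantified inside the statement).
  Vertex set [n] is represented as {0..<n}.\<close>

definition in_Rd :: "nat \<Rightarrow> (nat \<Rightarrow> real) \<Rightarrow> bool" where
  "in_Rd d x \<longleftrightarrow> (\<forall>i\<ge>d. x i = 0)"

definition conv_hull_pts :: "(nat \<Rightarrow> real) set \<Rightarrow> (nat \<Rightarrow> real) set" where
  "conv_hull_pts V = {x. \<exists>c. (\<forall>v\<in>V. 0 \<le> c v) \<and> (\<Sum>v\<in>V. c v) = 1
                              \<and> x = (\<lambda>k. \<Sum>v\<in>V. c v * v k)}"

definition polytope_in :: "nat \<Rightarrow> (nat \<Rightarrow> real) set \<Rightarrow> bool" where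
  "polytope_in d P \<longleftrightarrow> (\<exists>V. finite V \<and> V \<noteq> {} \<and> (\<forall>v\<in>V. in_Rd d v) \<and> P = conv_hull_pts V)"

text \<open>Minkowski sum P_sigma of the P_i, i in sigma; the empty sum is {0}.\<close>
definition mink_sum :: "(nat \<Rightarrow> (nat \<Rightarrow> real) set) \<Rightarrow> nat set \<Rightarrow> (nat \<Rightarrow> real) set" where
  "mink_sum P \<sigma> = {x. \<exists>y. (\<forall>i\<in>\<sigma>. y i \<in> P i) \<and> x = (\<lambda>k. \<Sum>i\<in>\<sigma>. y i k)}"

definition minkowski_complex :: "nat \<Rightarrow> (nat \<Rightarrow> (nat \<Rightarrow> real) set) \<Rightarrow> (nat \<Rightarrow> real) \<Rightarrow> nat set set" where
  "minkowski_complex n P \<mu> = {\<sigma>. \<sigma> \<subseteq> {0..<n} \<and> \<mu> \<notin> mink_sum P \<sigma>}"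

definition simplicial_complex :: "nat \<Rightarrow> nat set set \<Rightarrow> bool" where
  "simplicial_complex n \<Delta> \<longleftrightarrow> \<Delta> \<subseteq> Pow {0..<n} \<and> (\<forall>\<sigma>\<in>\<Delta>. \<forall>\<tau>. \<tau> \<subseteq> \<sigma> \<longrightarrow> \<tau> \<in> \<Delta>)"

definition realizable_in :: "nat \<Rightarrow> nat set set \<Rightarrow> nat \<Rightarrow> bool" where
  "realizable_in n \<Delta> d \<longleftrightarrow>
     (\<exists>P \<mu>. (\<forall>i<n. polytope_in d (P i) \<and> 0 \<in> P i) \<and> in_Rd d \<mu>
            \<and> \<Delta> = minkowski_complex n P \<mu>)"

definition ctd :: "nat \<Rightarrow> nat set set \<Rightarrow> nat" where
  "ctd n \<Delta> = (LEAST d. realizable_in n \<Delta> d)"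

end

theory Submission
  imports Defs "HOL-Library.Nat_Bijection" "HOL-Library.Indicator_Function"
begin

text \<open>Take \<open>M \<ge> 2d + 2\<close> disjoint pairs \<open>{j, j + M}\<close> of vertices and let the faces be the sets
  containing at most \<open>d\<close> whole pairs. If this complex were realized in \<open>\<real>\<^sup>e\<close> with \<open>e \<le> d\<close>, the two
  halves of the set of pairs would be non-faces, so \<open>\<mu>\<close> would be the average of points
  \<open>y\<^sub>i \<in> P\<^sub>i\<close> over all vertices. Weights may be shifted inside pairs without changing the
  weighted sum as long as the differences \<open>y\<^sub>j - y\<^bsub>j+M\<^esub>\<close> of the pairs with two positive weights are
  linearly dependent, i.e. as long as there are more than \<open>e\<close> such pairs. Once at most \<open>e \<le> d\<close> remain,
  the support of the weights is a face whose Minkowski sum contains \<open>\<mu>\<close>, a contradiction.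
  Since every complex is realizable in some dimension, \<open>ctd\<close> is then at least \<open>d + 1\<close>.\<close>

lemma vertex_in_conv_hull_pts:
  assumes "finite V" "v \<in> V"
  shows "v \<in> conv_hull_pts V"
  unfolding conv_hull_pts_def
proof (intro CollectI exI[of _ "\<lambda>w. if w = v then 1 else 0"] conjI ext)
  show "(\<Sum>w\<in>V. if w = v then 1 else (0::real)) = 1"
    using assms by (simp add: sum.delta)
  show "v k = (\<Sum>w\<in>V. (if w = v then 1 else 0) * w k)" for k
  proof -
    have "(\<Sum>w\<in>V. (if w = v then 1 else 0) * w k) = (\<Sum>w\<in>V. if w = v then v k else 0)"
      by (rule sum.cong) auto
    then show ?thesis using assms by (simp add: sum.delta')
  qed
qed simp

lemma conv_hull_pts_coord_zero:
  assumes "x \<in> conv_hull_pts V" "\<forall>v\<in>V. v k = 0"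
  shows "x k = 0"
  using assms unfolding conv_hull_pts_def by (auto intro: sum.neutral)

lemma in_Rd_conv_hull_pts:
  assumes "x \<in> conv_hull_pts V" "\<forall>v\<in>V. in_Rd d v"
  shows "in_Rd d x"
  using assms conv_hull_pts_coord_zero unfolding in_Rd_def by blast

lemma conv_hull_pts_convex:
  assumes "x \<in> conv_hull_pts V" "z \<in> conv_hull_pts V" "0 \<le> a" "a \<le> 1"
  shows "(\<lambda>k. a * x k + (1 - a) * z k) \<in> conv_hull_pts V"
proof -
  obtain c where c: "\<forall>v\<in>V. 0 \<le> c v" "(\<Sum>v\<in>V. c v) = 1" "x = (\<lambda>k. \<Sum>v\<in>V. c v * v k)"
    using assms(1) unfolding conv_hull_pts_def by auto
  obtain c' where c': "\<forall>v\<in>V. 0 \<le> c' v" "(\<Sum>v\<in>V. c' v) = 1" "z = (\<lambda>k. \<Sum>v\<in>V. c' v * v k)"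
    using assms(2) unfolding conv_hull_pts_def by auto
  show ?thesis unfolding conv_hull_pts_def
  proof (intro CollectI exI[of _ "\<lambda>v. a * c v + (1 - a) * c' v"] conjI ext)
    show "\<forall>v\<in>V. 0 \<le> a * c v + (1 - a) * c' v"
      using c(1) c'(1) assms(3,4) by simp
    show "(\<Sum>v\<in>V. a * c v + (1 - a) * c' v) = 1"
      using c(2) c'(2) by (simp add: sum.distrib flip: sum_distrib_left)
    show "a * x k + (1 - a) * z k = (\<Sum>v\<in>V. (a * c v + (1 - a) * c' v) * v k)" for k
    proof -
      have "(\<Sum>v\<in>V. (a * c v + (1 - a) * c' v) * v k)
          = (\<Sum>v\<in>V. a * (c v * v k) + (1 - a) * (c' v * v k))"
        by (rule sum.cong) (auto simp: algebra_simps)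
      then show ?thesis
        unfolding c(3) c'(3) by (simp add: sum.distrib sum_distrib_left)
    qed
  qed
qed

lemma polytope_in_in_Rd: "polytope_in d P \<Longrightarrow> x \<in> P \<Longrightarrow> in_Rd d x"
  unfolding polytope_in_def using in_Rd_conv_hull_pts by blast

lemma polytope_in_scale:
  assumes "polytope_in d P" "0 \<in> P" "x \<in> P" "0 \<le> a" "a \<le> 1"
  shows "(\<lambda>k. a * x k) \<in> P"
  using assms conv_hull_pts_convex[of x _ 0 a] unfolding polytope_in_def by auto

lemma finite_faces: "simplicial_complex n \<Delta> \<Longrightarrow> finite \<Delta>"
  unfolding simplicial_complex_def by (meson finite_Pow_iff finite_atLeastLessThan finite_subset)

lemma finite_face: "simplicial_complex n \<Delta> \<Longrightarrow> \<sigma> \<in> \<Delta> \<Longrightarrow> finite \<sigma>"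
  unfolding simplicial_complex_def by (meson PowD finite_atLeastLessThan finite_subset subsetD)

text \<open>The face \<open>\<tau>\<close> gets the coordinate \<open>set_encode \<tau>\<close>; \<open>P\<^sub>i\<close> is the unit cube on the coordinates of the
  faces missing \<open>i\<close>, and \<open>\<mu>\<close> is the all-ones vector on the coordinates of all faces.\<close>

definition cube_polytope :: "nat set set \<Rightarrow> nat \<Rightarrow> (nat \<Rightarrow> real) set" where
  "cube_polytope \<Delta> i = conv_hull_pts (indicator ` Pow (set_encode ` {\<tau>\<in>\<Delta>. i \<notin> \<tau>}))"

lemma cube_polytope_face:
  assumes "simplicial_complex n \<Delta>" "\<sigma> \<in> \<Delta>"
  shows "indicator (set_encode ` \<Delta>) \<notin> mink_sum (cube_polytope \<Delta>) \<sigma>"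
proof
  assume "indicator (set_encode ` \<Delta>) \<in> mink_sum (cube_polytope \<Delta>) \<sigma>"
  then obtain y where y: "\<forall>i\<in>\<sigma>. y i \<in> cube_polytope \<Delta> i"
    and sum: "indicator (set_encode ` \<Delta>) = (\<lambda>k. \<Sum>i\<in>\<sigma>. y i k)"
    unfolding mink_sum_def by auto
  have "y i (set_encode \<sigma>) = 0" if "i \<in> \<sigma>" for i
  proof (rule conv_hull_pts_coord_zero)
    show "y i \<in> conv_hull_pts (indicator ` Pow (set_encode ` {\<tau>\<in>\<Delta>. i \<notin> \<tau>}))"
      using y that unfolding cube_polytope_def by blast
    have "set_encode \<sigma> \<noteq> set_encode \<tau>" if "\<tau> \<in> \<Delta>" "i \<notin> \<tau>" for \<tau>
      using that \<open>i \<in> \<sigma>\<close> finite_face[OF assms(1)] assms(2) by (metis set_encode_inverse)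
    then show "\<forall>v\<in>indicator ` Pow (set_encode ` {\<tau>\<in>\<Delta>. i \<notin> \<tau>}). v (set_encode \<sigma>) = 0"
      by (auto simp: indicator_def)
  qed
  then have "indicator (set_encode ` \<Delta>) (set_encode \<sigma>) = (0::real)"
    by (simp add: sum)
  then show False using assms(2) by simp
qed

lemma cube_polytope_nonface:
  assumes sc: "simplicial_complex n \<Delta>" and \<sigma>: "\<sigma> \<subseteq> {0..<n}" "\<sigma> \<notin> \<Delta>"
  shows "indicator (set_encode ` \<Delta>) \<in> mink_sum (cube_polytope \<Delta>) \<sigma>"
proof -
  have "\<exists>i\<in>\<sigma>. i \<notin> \<tau>" if "\<tau> \<in> \<Delta>" for \<tau>
  proof (rule ccontr)
    assume "\<not> (\<exists>i\<in>\<sigma>. i \<notin> \<tau>)"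
    then have "\<sigma> \<subseteq> \<tau>" by blast
    then show False using sc \<sigma>(2) that unfolding simplicial_complex_def by blast
  qed
  then obtain f where f: "\<And>\<tau>. \<tau> \<in> \<Delta> \<Longrightarrow> f \<tau> \<in> \<sigma> \<and> f \<tau> \<notin> \<tau>"
    by metis
  \<comment> \<open>Each face \<open>\<tau>\<close> misses a vertex \<open>f \<tau>\<close> of \<open>\<sigma>\<close>; the summand of \<open>f \<tau>\<close> supplies the coordinate of \<open>\<tau>\<close>.\<close>
  define y :: "nat \<Rightarrow> nat \<Rightarrow> real" where "y i = indicator (set_encode ` {\<tau>\<in>\<Delta>. f \<tau> = i})" for i
  have fin: "finite (set_encode ` {\<tau>\<in>\<Delta>. i \<notin> \<tau>})" for i
    using finite_faces[OF sc] by simp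
  have "y i \<in> cube_polytope \<Delta> i" for i
    unfolding y_def cube_polytope_def
    by (rule vertex_in_conv_hull_pts) (use fin f in auto)
  moreover have "indicator (set_encode ` \<Delta>) k = (\<Sum>i\<in>\<sigma>. y i k)" for k
  proof (cases "k \<in> set_encode ` \<Delta>")
    case True
    then obtain \<tau> where \<tau>: "\<tau> \<in> \<Delta>" "k = set_encode \<tau>" by blast
    have "y i k = (if i = f \<tau> then 1 else 0)" for i
      using \<tau> finite_face[OF sc] unfolding y_def indicator_def
      by (auto dest: inj_onD[OF inj_on_set_encode])
    moreover have "finite \<sigma>"
      using \<sigma>(1) finite_subset by blast
    ultimately show ?thesis
      using True f[OF \<tau>(1)] by (simp add: sum.delta')
  next
    case False
    then have "y i k = 0" for i
      unfolding y_def by (auto simp: indicator_def)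
    then show ?thesis using False by simp
  qed
  ultimately show ?thesis unfolding mink_sum_def by auto
qed

lemma simplicial_complex_realizable:
  assumes sc: "simplicial_complex n \<Delta>"
  shows "\<exists>D. realizable_in n \<Delta> D"
proof -
  define D where "D = Suc (Max (set_encode ` \<Delta>))"
  have fin: "finite (set_encode ` \<Delta>)"
    using finite_faces[OF sc] by simp
  then have coords: "k \<in> set_encode ` \<Delta> \<Longrightarrow> k < D" for k
    unfolding D_def by (simp add: le_imp_less_Suc)
  have "polytope_in D (cube_polytope \<Delta> i) \<and> 0 \<in> cube_polytope \<Delta> i" for i
  proof -
    have "0 \<in> indicator ` Pow (set_encode ` {\<tau>\<in>\<Delta>. i \<notin> \<tau>})"
      by (rule image_eqI[of _ _ "{}"]) (auto simp: fun_eq_iff)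
    moreover have "finite (indicator ` Pow (set_encode ` {\<tau>\<in>\<Delta>. i \<notin> \<tau>}) :: (nat \<Rightarrow> real) set)"
      using finite_faces[OF sc] by simp
    moreover have "\<forall>v\<in>indicator ` Pow (set_encode ` {\<tau>\<in>\<Delta>. i \<notin> \<tau>}). in_Rd D (v :: nat \<Rightarrow> real)"
      using coords unfolding in_Rd_def indicator_def by fastforce
    ultimately show ?thesis
      unfolding polytope_in_def cube_polytope_def by (auto intro: vertex_in_conv_hull_pts)
  qed
  moreover have "in_Rd D (indicator (set_encode ` \<Delta>))"
    using coords unfolding in_Rd_def indicator_def by fastforce
  moreover have "\<Delta> = minkowski_complex n (cube_polytope \<Delta>) (indicator (set_encode ` \<Delta>))"
  proof (rule set_eqI)
    fix \<sigma>
    have "\<Delta> \<subseteq> Pow {0..<n}" using sc unfolding simplicial_complex_def by blast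
    then show "\<sigma> \<in> \<Delta> \<longleftrightarrow> \<sigma> \<in> minkowski_complex n (cube_polytope \<Delta>) (indicator (set_encode ` \<Delta>))"
      using cube_polytope_face[OF sc] cube_polytope_nonface[OF sc]
      unfolding minkowski_complex_def by blast
  qed
  ultimately show ?thesis unfolding realizable_in_def by blast
qed

lemma in_Rd_linear_dependence:
  assumes "finite J" "e < card J" "\<forall>j\<in>J. in_Rd e (w j)"
  shows "\<exists>\<alpha>. (\<exists>j\<in>J. \<alpha> j \<noteq> 0) \<and> (\<forall>k. (\<Sum>j\<in>J. \<alpha> j * w j k) = 0)"
  using assms
proof (induction e arbitrary: J w)
  case 0
  then obtain j0 where "j0 \<in> J" by fastforce
  moreover have "w j k = 0" if "j \<in> J" for j k
    using "0.prems"(3) that unfolding in_Rd_def by auto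
  ultimately show ?case by (intro exI[of _ "\<lambda>j. 1"]) auto
next
  case (Suc e)
  show ?case
  proof (cases "\<forall>j\<in>J. w j e = 0")
    case True
    then have "\<forall>j\<in>J. in_Rd e (w j)"
      using Suc.prems(3) unfolding in_Rd_def by (metis le_eq_less_or_eq Suc_le_eq)
    then show ?thesis using Suc.IH[of J w] Suc.prems by auto
  next
    case False
    then obtain j0 where j0: "j0 \<in> J" "w j0 e \<noteq> 0" by auto
    define J' where "J' = J - {j0}"
    have J': "finite J'" "e < card J'"
      using Suc.prems(1,2) j0(1) unfolding J'_def by auto
    \<comment> \<open>Gaussian elimination of the last coordinate with the pivot \<open>w j0\<close>.\<close>
    define w' where "w' j = (\<lambda>k. w j k - (w j e / w j0 e) * w j0 k)" for j
    have "in_Rd e (w' j)" if "j \<in> J'" for j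
      unfolding in_Rd_def
    proof (intro allI impI)
      fix i assume "e \<le> i"
      have "in_Rd (Suc e) (w j)" "in_Rd (Suc e) (w j0)"
        using Suc.prems(3) that j0(1) unfolding J'_def by auto
      then show "w' j i = 0"
        using \<open>e \<le> i\<close> j0(2) unfolding in_Rd_def w'_def
        by (cases "i = e") auto
    qed
    then obtain \<beta> where \<beta>: "\<exists>j\<in>J'. \<beta> j \<noteq> 0" "\<forall>k. (\<Sum>j\<in>J'. \<beta> j * w' j k) = 0"
      using Suc.IH[OF J'] by blast
    define c where "c = (\<Sum>j\<in>J'. \<beta> j * w j e) / w j0 e"
    have "(\<Sum>j\<in>J. (\<beta>(j0 := - c)) j * w j k) = 0" for k
    proof -
      have "(\<Sum>j\<in>J. (\<beta>(j0 := - c)) j * w j k) = - c * w j0 k + (\<Sum>j\<in>J'. \<beta> j * w j k)"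
        using Suc.prems(1) j0(1) unfolding J'_def by (simp add: sum.remove)
      also have "(\<Sum>j\<in>J'. \<beta> j * w j k) = (\<Sum>j\<in>J'. \<beta> j * w' j k + \<beta> j * w j e / w j0 e * w j0 k)"
        unfolding w'_def by (rule sum.cong) (auto simp: algebra_simps)
      also have "\<dots> = c * w j0 k"
        using \<beta>(2) unfolding c_def by (simp add: sum.distrib sum_divide_distrib sum_distrib_right)
      finally show ?thesis by simp
    qed
    moreover have "\<exists>j\<in>J. (\<beta>(j0 := - c)) j \<noteq> 0"
      using \<beta>(1) unfolding J'_def by auto
    ultimately show ?thesis by blast
  qed
qed

lemma ratio_test:
  fixes t \<delta> :: "'a \<Rightarrow> real"
  assumes "finite I" "\<forall>i\<in>I. 0 \<le> t i" "\<forall>i\<in>I. \<delta> i < 0 \<longrightarrow> 0 < t i" "\<exists>i\<in>I. \<delta> i < 0"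
  shows "\<exists>s>0. (\<forall>i\<in>I. 0 \<le> t i + s * \<delta> i) \<and> (\<exists>i\<in>I. \<delta> i < 0 \<and> t i + s * \<delta> i = 0)"
proof -
  define K where "K = {i\<in>I. \<delta> i < 0}"
  define s where "s = Min ((\<lambda>i. t i / - \<delta> i) ` K)"
  have K: "finite K" "K \<noteq> {}"
    using assms(1,4) unfolding K_def by auto
  then obtain i0 where i0: "i0 \<in> K" "s = t i0 / - \<delta> i0"
    unfolding s_def using Min_in by (metis (no_types, lifting) finite_imageI image_iff image_is_empty)
  have s_le: "s \<le> t i / - \<delta> i" if "i \<in> K" for i
    unfolding s_def using K(1) that by simp
  have "0 < s"
    using i0 assms(3) unfolding K_def by (simp add: divide_pos_neg)
  moreover have "0 \<le> t i + s * \<delta> i" if "i \<in> I" for i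
  proof (cases "\<delta> i < 0")
    case True
    then have "s * - \<delta> i \<le> t i / - \<delta> i * - \<delta> i"
      using s_le[of i] that unfolding K_def by (intro mult_right_mono) auto
    with True have "s * - \<delta> i \<le> t i" by simp
    then show ?thesis by simp
  next
    case False
    then show ?thesis using \<open>0 < s\<close> assms(2) that by simp
  qed
  moreover have "t i0 + s * \<delta> i0 = 0"
    using i0 unfolding K_def by simp
  ultimately show ?thesis
    using i0(1) unfolding K_def by blast
qed

lemma sum_lessThan_double:
  fixes f :: "nat \<Rightarrow> 'a::comm_monoid_add"
  shows "(\<Sum>i<2*M. f i) = (\<Sum>j<M. f j + f (j + M))"
proof -
  have "(\<Sum>i<2*M. f i) = (\<Sum>i<M. f i) + (\<Sum>i=M..<M+M. f i)"
    by (simp add: mult_2 lessThan_atLeast0 sum.atLeastLessThan_concat)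
  also have "(\<Sum>i=M..<M+M. f i) = (\<Sum>j<M. f (j + M))"
    using sum.shift_bounds_nat_ivl[of f 0 M M] by (simp add: lessThan_atLeast0)
  finally show ?thesis by (simp add: sum.distrib)
qed

definition full_pairs :: "nat \<Rightarrow> nat set \<Rightarrow> nat set" where
  "full_pairs M \<sigma> = {j. j < M \<and> j \<in> \<sigma> \<and> j + M \<in> \<sigma>}"

lemma finite_full_pairs [simp]: "finite (full_pairs M \<sigma>)"
  unfolding full_pairs_def by simp

definition pair_reweighting ::
    "nat \<Rightarrow> (nat \<Rightarrow> nat \<Rightarrow> real) \<Rightarrow> (nat \<Rightarrow> real) \<Rightarrow> (nat \<Rightarrow> real) \<Rightarrow> bool" where
  "pair_reweighting M y t t' \<longleftrightarrow> (\<forall>i<2*M. 0 \<le> t' i) \<and> (\<forall>j<M. t' j + t' (j + M) = t j + t (j + M))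
     \<and> (\<forall>k. (\<Sum>i<2*M. t' i * y i k) = (\<Sum>i<2*M. t i * y i k))"

lemma pair_reweighting_refl: "\<forall>i<2*M. 0 \<le> t i \<Longrightarrow> pair_reweighting M y t t"
  unfolding pair_reweighting_def by simp

lemma pair_reweighting_trans:
  "pair_reweighting M y t t' \<Longrightarrow> pair_reweighting M y t' t'' \<Longrightarrow> pair_reweighting M y t t''"
  unfolding pair_reweighting_def by simp

lemma pair_balanced_direction:
  fixes M :: nat and y :: "nat \<Rightarrow> nat \<Rightarrow> real"
  assumes y: "\<forall>i<2*M. in_Rd e (y i)" and L: "L \<subseteq> {..<M}" "e < card L"
  shows "\<exists>\<delta>. (\<forall>j<M. \<delta> (j + M) = - \<delta> j \<and> (j \<notin> L \<longrightarrow> \<delta> j = 0)) \<and> (\<exists>i<2*M. \<delta> i < 0)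
      \<and> (\<forall>k. (\<Sum>i<2*M. \<delta> i * y i k) = 0)"
proof -
  have "finite L"
    using L(1) by (rule finite_subset) simp
  moreover have "\<forall>j\<in>L. in_Rd e (\<lambda>k. y j k - y (j + M) k)"
    using y L(1) unfolding in_Rd_def by auto
  ultimately obtain \<alpha> where \<alpha>: "\<exists>j\<in>L. \<alpha> j \<noteq> 0" "\<forall>k. (\<Sum>j\<in>L. \<alpha> j * (y j k - y (j + M) k)) = 0"
    using in_Rd_linear_dependence[of L e "\<lambda>j k. y j k - y (j + M) k"] L(2) by auto
  define \<beta> where "\<beta> j = (if j \<in> L then \<alpha> j else 0)" for j
  define \<delta> where "\<delta> i = (if i < M then \<beta> i else - \<beta> (i - M))" for i
  have \<delta>_pair: "\<delta> j = \<beta> j" "\<delta> (j + M) = - \<beta> j" if "j < M" for j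
    using that unfolding \<delta>_def by auto
  have "(\<Sum>i<2*M. \<delta> i * y i k) = 0" for k
  proof -
    have "(\<Sum>i<2*M. \<delta> i * y i k) = (\<Sum>j<M. \<beta> j * (y j k - y (j + M) k))"
      unfolding sum_lessThan_double by (rule sum.cong) (simp_all add: \<delta>_pair algebra_simps)
    also have "\<dots> = (\<Sum>j\<in>L. \<alpha> j * (y j k - y (j + M) k))"
      using L(1) unfolding \<beta>_def by (intro sum.mono_neutral_cong_right) auto
    finally show ?thesis using \<alpha>(2) by simp
  qed
  moreover have "\<exists>i<2*M. \<delta> i < 0"
  proof -
    obtain j where j: "j \<in> L" "\<alpha> j \<noteq> 0" using \<alpha>(1) by blast
    then have "\<delta> j < 0 \<or> \<delta> (j + M) < 0" "j < M"
      using L(1) \<delta>_pair[of j] unfolding \<beta>_def by auto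
    moreover have "j < 2*M" "j + M < 2*M" using \<open>j < M\<close> by simp_all
    ultimately show ?thesis by blast
  qed
  moreover have "\<forall>j<M. \<delta> (j + M) = - \<delta> j \<and> (j \<notin> L \<longrightarrow> \<delta> j = 0)"
    using \<delta>_pair unfolding \<beta>_def by simp
  ultimately show ?thesis by blast
qed

lemma full_pairs_reduction_step:
  assumes y: "\<forall>i<2*M. in_Rd e (y i)" and t: "\<forall>i<2*M. 0 \<le> t i"
    and many: "e < card (full_pairs M {i. 0 < t i})"
  shows "\<exists>t'. pair_reweighting M y t t' \<and> full_pairs M {i. 0 < t' i} \<subset> full_pairs M {i. 0 < t i}"
proof -
  define L where "L = full_pairs M {i. 0 < t i}"
  have L: "L \<subseteq> {..<M}" "\<forall>j\<in>L. 0 < t j \<and> 0 < t (j + M)"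
    unfolding L_def full_pairs_def by auto
  obtain \<delta> where \<delta>: "\<forall>j<M. \<delta> (j + M) = - \<delta> j \<and> (j \<notin> L \<longrightarrow> \<delta> j = 0)" "\<exists>i<2*M. \<delta> i < 0"
    "\<forall>k. (\<Sum>i<2*M. \<delta> i * y i k) = 0"
    using pair_balanced_direction[OF y L(1)] many unfolding L_def by blast
  have pair_index: "\<exists>j<M. i = j \<or> i = j + M" if "i < 2*M" for i
    using that by (cases "i < M") (auto intro: exI[of _ "i - M"])
  have "\<forall>i\<in>{..<2*M}. \<delta> i < 0 \<longrightarrow> 0 < t i"
  proof (intro ballI impI)
    fix i assume "i \<in> {..<2*M}" "\<delta> i < 0"
    then obtain j where "j < M" "i = j \<or> i = j + M" using pair_index by auto
    then show "0 < t i" using \<delta>(1) \<open>\<delta> i < 0\<close> L(2) by fastforce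
  qed
  moreover have "\<exists>i\<in>{..<2*M}. \<delta> i < 0"
    using \<delta>(2) by auto
  moreover have "\<forall>i\<in>{..<2*M}. 0 \<le> t i"
    using t by simp
  ultimately obtain s where s: "\<forall>i\<in>{..<2*M}. 0 \<le> t i + s * \<delta> i"
    and "\<exists>i\<in>{..<2*M}. \<delta> i < 0 \<and> t i + s * \<delta> i = 0"
    using ratio_test[OF finite_lessThan] by blast
  then obtain i0 where i0: "i0 < 2*M" "\<delta> i0 < 0" "t i0 + s * \<delta> i0 = 0"
    by auto
  define t' where "t' i = t i + s * \<delta> i" for i
  have "pair_reweighting M y t t'"
    unfolding pair_reweighting_def t'_def using s \<delta>(1,3)
    by (simp add: algebra_simps sum.distrib flip: sum_distrib_left)
  moreover obtain j0 where j0: "j0 < M" "i0 = j0 \<or> i0 = j0 + M"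
    using pair_index i0(1) by blast
  then have "j0 \<in> L"
    using \<delta>(1) i0(2) by fastforce
  moreover have "full_pairs M {i. 0 < t' i} \<subseteq> L - {j0}"
  proof
    fix j assume "j \<in> full_pairs M {i. 0 < t' i}"
    then have j: "j < M" "0 < t' j" "0 < t' (j + M)" unfolding full_pairs_def by auto
    have "j \<in> L"
    proof (rule ccontr)
      assume "j \<notin> L"
      then have "t' j = t j" "t' (j + M) = t (j + M)"
        using \<delta>(1) j(1) unfolding t'_def by simp_all
      then show False
        using \<open>j \<notin> L\<close> j unfolding L_def full_pairs_def by simp
    qed
    moreover have "j \<noteq> j0"
      using i0(3) j(2,3) j0(2) unfolding t'_def by auto
    ultimately show "j \<in> L - {j0}" by simp
  qed
  ultimately show ?thesis
    unfolding L_def by blast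
qed

lemma full_pairs_reduction:
  assumes "\<forall>i<2*M. in_Rd e (y i)" "\<forall>i<2*M. 0 \<le> t i"
  shows "\<exists>t'. pair_reweighting M y t t' \<and> card (full_pairs M {i. 0 < t' i}) \<le> e"
  using assms(2)
proof (induction "card (full_pairs M {i. 0 < t i})" arbitrary: t rule: less_induct)
  case less
  show ?case
  proof (cases "card (full_pairs M {i. 0 < t i}) \<le> e")
    case True
    then show ?thesis using pair_reweighting_refl less.prems by blast
  next
    case False
    then obtain t' where t': "pair_reweighting M y t t'"
      "full_pairs M {i. 0 < t' i} \<subset> full_pairs M {i. 0 < t i}"
      using full_pairs_reduction_step[OF assms(1) less.prems] by force
    have "card (full_pairs M {i. 0 < t' i}) < card (full_pairs M {i. 0 < t i})"
      using t'(2) by (simp add: psubset_card_mono)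
    moreover have "\<forall>i<2*M. 0 \<le> t' i"
      using t'(1) unfolding pair_reweighting_def by blast
    ultimately obtain t'' where "pair_reweighting M y t' t''" "card (full_pairs M {i. 0 < t'' i}) \<le> e"
      using less.hyps by blast
    then show ?thesis
      using t'(1) pair_reweighting_trans by blast
  qed
qed

definition pair_complex :: "nat \<Rightarrow> nat \<Rightarrow> nat set set" where
  "pair_complex M d = {\<sigma>. \<sigma> \<subseteq> {0..<2*M} \<and> card (full_pairs M \<sigma>) \<le> d}"

lemma simplicial_complex_pair_complex: "simplicial_complex (2*M) (pair_complex M d)"
  unfolding simplicial_complex_def
proof (intro conjI ballI allI impI)
  show "pair_complex M d \<subseteq> Pow {0..<2*M}"
    unfolding pair_complex_def by auto
  fix \<sigma> \<tau> assume "\<sigma> \<in> pair_complex M d" "\<tau> \<subseteq> \<sigma>"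
  moreover have "full_pairs M \<tau> \<subseteq> full_pairs M \<sigma>"
    using \<open>\<tau> \<subseteq> \<sigma>\<close> unfolding full_pairs_def by auto
  then have "card (full_pairs M \<tau>) \<le> card (full_pairs M \<sigma>)"
    by (simp add: card_mono)
  ultimately show "\<tau> \<in> pair_complex M d"
    unfolding pair_complex_def by auto
qed

lemma mink_sum_disjoint_halves:
  assumes "\<mu> \<in> mink_sum P A" "\<mu> \<in> mink_sum P B" "A \<inter> B = {}" "finite A" "finite B"
  shows "\<exists>y. (\<forall>i\<in>A \<union> B. y i \<in> P i) \<and> (\<forall>k. \<mu> k = (\<Sum>i\<in>A \<union> B. y i k / 2))"
proof -
  obtain a where a: "\<forall>i\<in>A. a i \<in> P i" "\<mu> = (\<lambda>k. \<Sum>i\<in>A. a i k)"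
    using assms(1) unfolding mink_sum_def by auto
  obtain b where b: "\<forall>i\<in>B. b i \<in> P i" "\<mu> = (\<lambda>k. \<Sum>i\<in>B. b i k)"
    using assms(2) unfolding mink_sum_def by auto
  define y where "y i = (if i \<in> A then a i else b i)" for i
  have "\<mu> k = (\<Sum>i\<in>A \<union> B. y i k / 2)" for k
  proof -
    have "(\<Sum>i\<in>B. y i k) = (\<Sum>i\<in>B. b i k)"
      using assms(3) unfolding y_def by (intro sum.cong) auto
    moreover have "\<mu> k = (\<Sum>i\<in>A. a i k)" "\<mu> k = (\<Sum>i\<in>B. b i k)"
      by (subst a(2); simp) (subst b(2); simp)
    ultimately show ?thesis
      using assms(3-5) unfolding y_def by (simp add: sum.union_disjoint flip: sum_divide_distrib)
  qed
  moreover have "\<forall>i\<in>A \<union> B. y i \<in> P i"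
    using a(1) b(1) unfolding y_def by auto
  ultimately show ?thesis by blast
qed

lemma weighted_sum_in_mink_sum:
  assumes "\<forall>i\<in>\<sigma>. polytope_in d (P i) \<and> 0 \<in> P i \<and> y i \<in> P i \<and> 0 \<le> t i \<and> t i \<le> 1"
  shows "(\<lambda>k. \<Sum>i\<in>\<sigma>. t i * y i k) \<in> mink_sum P \<sigma>"
  unfolding mink_sum_def
proof (intro CollectI exI[of _ "\<lambda>i k. t i * y i k"] conjI ballI)
  show "(\<lambda>k. t i * y i k) \<in> P i" if "i \<in> \<sigma>" for i
    using assms that by (auto intro: polytope_in_scale)
qed simp

lemma mink_sum_pair_reweighting:
  assumes "\<forall>i<2*M. polytope_in d (P i) \<and> 0 \<in> P i \<and> y i \<in> P i"
    and t: "pair_reweighting M y (\<lambda>_. 1/2) t"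
  shows "(\<lambda>k. \<Sum>i<2*M. 1/2 * y i k) \<in> mink_sum P {i. i < 2*M \<and> 0 < t i}"
proof -
  define \<sigma> where "\<sigma> = {i. i < 2*M \<and> 0 < t i}"
  have "t i \<le> 1" if "i < 2*M" for i
  proof (cases "i < M")
    case True
    then have "t i + t (i + M) = 1" "0 \<le> t (i + M)"
      using t unfolding pair_reweighting_def by auto
    then show ?thesis by linarith
  next
    case False
    define j where "j = i - M"
    have "j < M" "i = j + M"
      using False that unfolding j_def by auto
    then have "t j + t i = 1" "0 \<le> t j"
      using t unfolding pair_reweighting_def by auto
    then show ?thesis by linarith
  qed
  then have "(\<lambda>k. \<Sum>i\<in>\<sigma>. t i * y i k) \<in> mink_sum P \<sigma>"
    using assms unfolding \<sigma>_def pair_reweighting_def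
    by (intro weighted_sum_in_mink_sum) auto
  moreover have "(\<Sum>i\<in>\<sigma>. t i * y i k) = (\<Sum>i<2*M. 1/2 * y i k)" for k
  proof -
    have "(\<Sum>i\<in>\<sigma>. t i * y i k) = (\<Sum>i<2*M. t i * y i k)"
    proof (rule sum.mono_neutral_left)
      show "\<forall>i\<in>{..<2*M} - \<sigma>. t i * y i k = 0"
        using t unfolding \<sigma>_def pair_reweighting_def by force
    qed (auto simp: \<sigma>_def)
    then show ?thesis using t unfolding pair_reweighting_def by simp
  qed
  ultimately show ?thesis
    unfolding \<sigma>_def by simp
qed

lemma pair_complex_not_realizable:
  assumes "2 * d + 2 \<le> M" "e \<le> d"
  shows "\<not> realizable_in (2*M) (pair_complex M d) e"
proof
  assume "realizable_in (2*M) (pair_complex M d) e"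
  then obtain P \<mu> where P: "\<forall>i<2*M. polytope_in e (P i) \<and> 0 \<in> P i"
    and \<Delta>: "pair_complex M d = minkowski_complex (2*M) P \<mu>"
    unfolding realizable_in_def by blast
  have nonface: "\<mu> \<in> mink_sum P \<sigma>" if "\<sigma> \<subseteq> {0..<2*M}" "d < card (full_pairs M \<sigma>)" for \<sigma>
  proof -
    have "\<sigma> \<notin> pair_complex M d"
      using that(2) unfolding pair_complex_def by simp
    then show ?thesis
      using that(1) unfolding \<Delta> minkowski_complex_def by simp
  qed
  \<comment> \<open>Both halves of the pairs give non-faces, so \<open>\<mu>\<close> is the average of points \<open>y i \<in> P i\<close>.\<close>
  define A where "A = {i. i < 2*M \<and> i mod M \<le> d}"
  define B where "B = {i. i < 2*M \<and> d < i mod M}"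
  have "full_pairs M A = {..d}" "full_pairs M B = {d<..<M}"
    using assms(1) unfolding full_pairs_def A_def B_def by auto
  then have "\<mu> \<in> mink_sum P A" "\<mu> \<in> mink_sum P B"
    using assms(1) by (auto intro!: nonface simp: A_def B_def)
  moreover have "A \<inter> B = {}" "finite A" "finite B"
    unfolding A_def B_def by auto
  ultimately obtain y where "\<forall>i\<in>A \<union> B. y i \<in> P i" "\<forall>k. \<mu> k = (\<Sum>i\<in>A \<union> B. y i k / 2)"
    using mink_sum_disjoint_halves by blast
  moreover have "A \<union> B = {..<2*M}"
    unfolding A_def B_def by auto
  ultimately have y: "\<forall>i<2*M. y i \<in> P i" "\<forall>k. \<mu> k = (\<Sum>i<2*M. 1/2 * y i k)"
    by auto
  have "\<forall>i<2*M. in_Rd e (y i)"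
    using P y(1) polytope_in_in_Rd by blast
  then obtain t where t: "pair_reweighting M y (\<lambda>_. 1/2) t" "card (full_pairs M {i. 0 < t i}) \<le> e"
    using full_pairs_reduction[of M e y "\<lambda>_. 1/2"] by auto
  define \<sigma> where "\<sigma> = {i. i < 2*M \<and> 0 < t i}"
  have "full_pairs M \<sigma> = full_pairs M {i. 0 < t i}"
    unfolding \<sigma>_def full_pairs_def by auto
  then have "\<sigma> \<in> pair_complex M d"
    using t(2) assms(2) unfolding pair_complex_def \<sigma>_def by auto
  then have "\<mu> \<notin> mink_sum P \<sigma>"
    using \<Delta> unfolding minkowski_complex_def by auto
  moreover have "\<mu> = (\<lambda>k. \<Sum>i<2*M. 1/2 * y i k)"
    using y(2) by auto
  ultimately show False
    using mink_sum_pair_reweighting[of M e P y t] P y(1) t(1) unfolding \<sigma>_def by auto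
qed

lemma ctd_lower_bound:
  assumes "simplicial_complex n \<Delta>" "\<And>e. realizable_in n \<Delta> e \<Longrightarrow> d \<le> e"
  shows "d \<le> ctd n \<Delta>"
proof -
  obtain D where "realizable_in n \<Delta> D"
    using simplicial_complex_realizable[OF assms(1)] by blast
  then have "realizable_in n \<Delta> (ctd n \<Delta>)"
    unfolding ctd_def by (rule LeastI)
  then show ?thesis by (rule assms(2))
qed

theorem corollary4:
  fixes d :: nat
  shows "\<exists>n \<Delta>. simplicial_complex n \<Delta> \<and> ctd n \<Delta> \<ge> d"
proof -
  have "d \<le> ctd (2 * (2*d+2)) (pair_complex (2*d+2) d)"
  proof (rule ctd_lower_bound)
    show "simplicial_complex (2 * (2*d+2)) (pair_complex (2*d+2) d)"
      by (rule simplicial_complex_pair_complex)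
    show "d \<le> e" if "realizable_in (2 * (2*d+2)) (pair_complex (2*d+2) d) e" for e
      using that pair_complex_not_realizable[of d "2*d+2" e] by linarith
  qed
  then show ?thesis using simplicial_complex_pair_complex by blast
qed

end
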